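(* In the setting described in the context, for $\tau\in L$ let $K^{\mathrm{S}}_\tau:Q\to\mathbb{C}$ be $K^{\mathrm{S}}_\tau(\phi)=\overline{B(\tau,\phi)}$. Then the linear span of $\{K^{\mathrm{S}}_\tau:\tau\in L\}$ is dense in $\mathrm{L}^2(Q,\mu_Q)$.
   Context: $L$ is a finite-dimensional real vector space and $[\cdot,\cdot]:L\times L\to\mathbb{R}$ is a bilinear form such that $\omega(\xi,\xi')=\frac12[\xi,\xi']-\frac12[\xi',\xi]$ is non-degenerate. Set $M=\{\tau\in L:[\xi,\tau]=0\ \forall\xi\in L\}$ and $N=\{\tau\in L:[\tau,\xi]=0\ \forall\xi\in L\}$, and assume $L=M\oplus N$. Let $Q=L/M$ with quotient map $q:L\to Q$; $[\cdot,\cdot]$ descends to $L\times Q\to\mathbb{R}$. $J:L\to L$ is linear with $J^2=-\mathrm{id}$, $\omega(J\cdot,J\cdot)=\omega$, and $g(\tau,\xi):=2\omega(\tau,J\xi)$ positive definite; $\{\tau,\xi\}:=g(\tau,\xi)+2\mathrm{i}\,\omega(\tau,\xi)$. $Q$ carries the quotient norm from $g$, and $j:Q\to L$ is the unique linear map with $q\circ j=\mathrm{id}_Q$ and $j(Q)\subseteq JM$. $\mu_Q$ is the Lebesgue measure on $Q$ normalized by $\int_Q\exp(-g(j(\phi),j(\phi)))\,\mathrm{d}\mu_Q(\phi)=1$. $B:L\times Q\to\mathbb{C}$ is $$B(\xi,\phi)=\exp\Big(\{j(\phi),\xi\}-\tfrac{\mathrm{i}}{2}[j(\phi),j(\phi)]-\tfrac12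 g(j(\phi),j(\phi))+\tfrac14 g(\xi,\xi)-\tfrac12\{j(q(\xi)),\xi\}\Big).$$ *)

theory Defs
  imports "HOL-Analysis.Analysis"
begin

text \<open>L is modelled by a Euclidean-space type 'l (only its real vector space
structure is used), Q = L/M by a Euclidean-space type 'q together with a surjective
linear map q whose kernel is M.\<close>

definition omega :: "('l \<Rightarrow> 'l \<Rightarrow> real) \<Rightarrow> 'l \<Rightarrow> 'l \<Rightarrow> real" where
  "omega bl x y = bl x y / 2 - bl y x / 2"

definition Mset :: "('l \<Rightarrow> 'l \<Rightarrow> real) \<Rightarrow> 'l set" where
  "Mset bl = {\<tau>. \<forall>\<xi>. bl \<xi> \<tau> = 0}"

definition Nset :: "('l \<Rightarrow> 'l \<Rightarrow> real) \<Rightarrow> 'l set" where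
  "Nset bl = {\<tau>. \<forall>\<xi>. bl \<tau> \<xi> = 0}"

definition gform :: "('l \<Rightarrow> 'l \<Rightarrow> real) \<Rightarrow> ('l \<Rightarrow> 'l) \<Rightarrow> 'l \<Rightarrow> 'l \<Rightarrow> real" where
  "gform bl J \<tau> \<xi> = 2 * omega bl \<tau> (J \<xi>)"

definition cbr :: "('l \<Rightarrow> 'l \<Rightarrow> real) \<Rightarrow> ('l \<Rightarrow> 'l) \<Rightarrow> 'l \<Rightarrow> 'l \<Rightarrow> complex" where
  "cbr bl J \<tau> \<xi> = complex_of_real (gform bl J \<tau> \<xi>) + 2 * \<i> * complex_of_real (omega bl \<tau> \<xi>)"

definition jmap :: "('l::real_vector \<Rightarrow> 'l \<Rightarrow> real) \<Rightarrow> ('l \<Rightarrow> 'l) \<Rightarrow> ('l \<Rightarrow> 'q::real_vector) \<Rightarrow> 'q \<Rightarrow> 'l" where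
  "jmap bl J q = (THE j. linear j \<and> (\<forall>\<phi>. q (j \<phi>) = \<phi>) \<and> range j \<subseteq> J ` Mset bl)"

definition Bfun :: "('l::real_vector \<Rightarrow> 'l \<Rightarrow> real) \<Rightarrow> ('l \<Rightarrow> 'l) \<Rightarrow> ('l \<Rightarrow> 'q::real_vector)
    \<Rightarrow> 'l \<Rightarrow> 'q \<Rightarrow> complex" where
  "Bfun bl J q \<xi> \<phi> =
     (let j = jmap bl J q in
      exp (cbr bl J (j \<phi>) \<xi>
           - (\<i> / 2) * complex_of_real (bl (j \<phi>) (j \<phi>))
           - complex_of_real (gform bl J (j \<phi>) (j \<phi>) / 2)
           + complex_of_real (gform bl J \<xi> \<xi> / 4)
           - cbr bl J (j (q \<xi>)) \<xi> / 2))"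

definition muQ :: "('l::real_vector \<Rightarrow> 'l \<Rightarrow> real) \<Rightarrow> ('l \<Rightarrow> 'l) \<Rightarrow> ('l \<Rightarrow> 'q::euclidean_space) \<Rightarrow> 'q measure" where
  "muQ bl J q = density lborel
     (\<lambda>_. inverse (\<integral>\<^sup>+ \<psi>. ennreal (exp (- gform bl J (jmap bl J q \<psi>) (jmap bl J q \<psi>))) \<partial>lborel))"

end

theory Submission
  imports Defs
begin

text \<open>
  Already the kernels with \<tau> \<in> M span a dense subspace. For \<tau> = - J (j \<psi>) \<in> M the
  conjugate kernel is, up to a constant, the character exp (i g(j \<phi>, j \<psi>)) of Q times one
  fixed nowhere vanishing Gaussian weight w, and since g is an inner product on j(Q) every
  character of Q arises this way. So the span contains P w for every trigonometric
  polynomial P, and \<mu>_Q is a constant multiple of Lebesgue measure.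

  It remains to see that these P w are dense in L2 for any continuous, nowhere vanishing,
  square integrable w. Truncate f to a bounded function of bounded support and approximate
  it by a continuous one (Lusin). Dividing by w, approximate the quotient uniformly on a
  large cube by a trigonometric polynomial with the cube as period cell (Stone-Weierstrass
  on a torus); this polynomial stays bounded, and w has small L2 mass outside the cube.
\<close>

definition trig_poly :: "('a::euclidean_space \<Rightarrow> complex) \<Rightarrow> bool" where
  "trig_poly P \<longleftrightarrow> (\<exists>V c. finite V \<and> (\<forall>x. P x = (\<Sum>v\<in>V. c v * exp (\<i> * of_real (x \<bullet> v)))))"

lemma trig_poly_exp: "trig_poly (\<lambda>x. c * exp (\<i> * of_real (x \<bullet> v)))"
  unfolding trig_poly_def by (rule exI[of _ "{v}"], rule exI[of _ "\<lambda>_. c"]) simp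

lemma trig_poly_const: "trig_poly (\<lambda>x. c)"
  using trig_poly_exp[of c 0] by simp

lemma trig_poly_add:
  assumes "trig_poly f" "trig_poly g"
  shows "trig_poly (\<lambda>x. f x + g x)"
proof -
  obtain V c where V: "finite V" "\<And>x. f x = (\<Sum>v\<in>V. c v * exp (\<i> * of_real (x \<bullet> v)))"
    using assms(1) unfolding trig_poly_def by blast
  obtain W d where W: "finite W" "\<And>x. g x = (\<Sum>v\<in>W. d v * exp (\<i> * of_real (x \<bullet> v)))"
    using assms(2) unfolding trig_poly_def by blast
  define c' where "c' v = (if v \<in> V then c v else 0) + (if v \<in> W then d v else 0)" for v
  have "f x + g x = (\<Sum>v\<in>V \<union> W. c' v * exp (\<i> * of_real (x \<bullet> v)))" for x
    by (simp add: c'_def distrib_right sum.distrib V W sum.If_cases Int_absorb1 Int_absorb2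
        if_distrib[of "\<lambda>a. a * _"] cong: if_cong)
  then show ?thesis
    unfolding trig_poly_def using V W by blast
qed

lemma trig_poly_sum:
  "finite I \<Longrightarrow> (\<And>i. i \<in> I \<Longrightarrow> trig_poly (f i)) \<Longrightarrow> trig_poly (\<lambda>x. \<Sum>i\<in>I. f i x)"
  by (induction I rule: finite_induct) (auto intro: trig_poly_add trig_poly_const)

lemma trig_poly_mult:
  assumes "trig_poly f" "trig_poly g"
  shows "trig_poly (\<lambda>x. f x * g x)"
proof -
  obtain V c where V: "finite V" "\<And>x. f x = (\<Sum>v\<in>V. c v * exp (\<i> * of_real (x \<bullet> v)))"
    using assms(1) unfolding trig_poly_def by blast
  obtain W d where W: "finite W" "\<And>x. g x = (\<Sum>v\<in>W. d v * exp (\<i> * of_real (x \<bullet> v)))"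
    using assms(2) unfolding trig_poly_def by blast
  have "f x * g x = (\<Sum>v\<in>V. \<Sum>w\<in>W. (c v * d w) * exp (\<i> * of_real (x \<bullet> (v + w))))" for x
    unfolding V(2) W(2) sum_product
    by (intro sum.cong refl) (simp add: inner_add_right distrib_left exp_add mult_ac)
  moreover have "trig_poly (\<lambda>x. \<Sum>v\<in>V. \<Sum>w\<in>W. (c v * d w) * exp (\<i> * of_real (x \<bullet> (v + w))))"
    by (intro trig_poly_sum V(1) W(1) trig_poly_exp)
  ultimately show ?thesis
    by simp
qed

lemma trig_poly_cos: "trig_poly (\<lambda>x. of_real (cos (x \<bullet> v)))"
proof -
  have "of_real (cos (x \<bullet> v)) =
      1/2 * exp (\<i> * of_real (x \<bullet> v)) + 1/2 * exp (\<i> * of_real (x \<bullet> (-v)))" for x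
    by (simp add: cos_exp_eq cos_of_real[symmetric] field_simps)
  then show ?thesis
    by (simp only:) (intro trig_poly_add trig_poly_exp)
qed

lemma trig_poly_sin: "trig_poly (\<lambda>x. of_real (sin (x \<bullet> v)))"
proof -
  have "of_real (sin (x \<bullet> v)) =
      - \<i>/2 * exp (\<i> * of_real (x \<bullet> v)) + \<i>/2 * exp (\<i> * of_real (x \<bullet> (-v)))" for x
    by (simp add: sin_exp_eq sin_of_real[symmetric] field_simps)
  then show ?thesis
    by (simp only:) (intro trig_poly_add trig_poly_exp)
qed

lemma continuous_on_trig_poly: "trig_poly P \<Longrightarrow> continuous_on S P"
  unfolding trig_poly_def by (auto intro!: continuous_intros)

text \<open>torus a identifies exactly the points whose coordinates differ by multiples of 2\<pi>/a.\<close>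

definition torus :: "real \<Rightarrow> 'a::euclidean_space \<Rightarrow> 'a \<times> 'a" where
  "torus a x = ((\<Sum>b\<in>Basis. cos (a * (x \<bullet> b)) *\<^sub>R b), (\<Sum>b\<in>Basis. sin (a * (x \<bullet> b)) *\<^sub>R b))"

lemma continuous_on_torus: "continuous_on S (torus a)"
  unfolding torus_def by (intro continuous_intros)

lemma inner_sum_Basis_scaleR: "b \<in> Basis \<Longrightarrow> (\<Sum>b'\<in>Basis. f b' *\<^sub>R b') \<bullet> (b::'a::euclidean_space) = f b"
  by (simp add: inner_sum_left inner_Basis if_distrib[of "\<lambda>t. _ * t"] sum.delta cong: if_cong)

lemma torus_eq_iff:
  "torus a x = torus a y \<longleftrightarrow>
    (\<forall>b\<in>Basis. cos (a * (x \<bullet> b)) = cos (a * (y \<bullet> b)) \<and> sin (a * (x \<bullet> b)) = sin (a * (y \<bullet> b)))"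
proof
  assume eq: "torus a x = torus a y"
  show "\<forall>b\<in>Basis. cos (a * (x \<bullet> b)) = cos (a * (y \<bullet> b)) \<and> sin (a * (x \<bullet> b)) = sin (a * (y \<bullet> b))"
  proof
    fix b :: 'a assume b: "b \<in> Basis"
    from eq have "fst (torus a x) \<bullet> b = fst (torus a y) \<bullet> b" "snd (torus a x) \<bullet> b = snd (torus a y) \<bullet> b"
      by simp_all
    then show "cos (a * (x \<bullet> b)) = cos (a * (y \<bullet> b)) \<and> sin (a * (x \<bullet> b)) = sin (a * (y \<bullet> b))"
      by (simp add: torus_def inner_sum_Basis_scaleR[OF b])
  qed
qed (auto simp: torus_def intro!: sum.cong)

lemma trig_poly_linear_torus:
  assumes "bounded_linear l"
  shows "trig_poly (\<lambda>x. of_real (l (torus a x)))"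
proof -
  interpret l: bounded_linear l by fact
  have "l (torus a x) = (\<Sum>b\<in>Basis. cos (x \<bullet> (a *\<^sub>R b)) * l (b, 0)) +
      (\<Sum>b\<in>Basis. sin (x \<bullet> (a *\<^sub>R b)) * l (0, b))" for x
  proof -
    have "torus a x = (\<Sum>b\<in>Basis. cos (a * (x \<bullet> b)) *\<^sub>R (b, 0)) +
        (\<Sum>b\<in>Basis. sin (a * (x \<bullet> b)) *\<^sub>R (0, b))"
      by (simp add: torus_def sum_prod)
    moreover have "l (c *\<^sub>R b, 0) = c * l (b, 0)" "l (0, c *\<^sub>R b) = c * l (0, b)" for c b
      using l.scale[of c "(b,0)"] l.scale[of c "(0,b)"] by simp_all
    ultimately show ?thesis
      by (simp add: l.add l.sum mult_ac)
  qed
  then have eq: "of_real (l (torus a x)) =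
      (\<Sum>b\<in>Basis. of_real (l (b, 0)) * of_real (cos (x \<bullet> (a *\<^sub>R b)))) +
      (\<Sum>b\<in>Basis. of_real (l (0, b)) * of_real (sin (x \<bullet> (a *\<^sub>R b))))" for x
    by (simp add: mult_ac)
  show ?thesis
    unfolding eq
    by (intro trig_poly_add trig_poly_sum trig_poly_mult trig_poly_const trig_poly_cos trig_poly_sin
        finite_Basis)
qed

lemma trig_poly_polynomial_torus:
  assumes "polynomial_function p"
  shows "trig_poly (\<lambda>x. p (torus a x))"
proof -
  have "trig_poly (\<lambda>x. of_real (r (torus a x)))" if "real_polynomial_function r" for r :: "'a \<times> 'a \<Rightarrow> real"
    using that by induction (auto intro: trig_poly_linear_torus trig_poly_const trig_poly_add trig_poly_mult)
  moreover have "real_polynomial_function (Re \<circ> p)" "real_polynomial_function (Im \<circ> p)"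
    using assms unfolding polynomial_function_def by (auto intro: bounded_linear_Re bounded_linear_Im)
  moreover have "p z = of_real ((Re \<circ> p) z) + \<i> * of_real ((Im \<circ> p) z)" for z
    by (simp add: complex_eq_iff)
  ultimately show ?thesis
    by (simp only:) (intro trig_poly_add trig_poly_mult trig_poly_const)
qed

definition cube :: "real \<Rightarrow> 'a::euclidean_space set" where
  "cube r = {x. \<forall>b\<in>Basis. \<bar>x \<bullet> b\<bar> \<le> r}"

lemma cube_eq_cbox: "cube r = cbox (- (r *\<^sub>R One)) (r *\<^sub>R One)"
  by (rule set_eqI) (auto simp: cube_def mem_box abs_le_iff inner_minus_left)

lemma compact_cube: "compact (cube r)"
  by (simp add: cube_eq_cbox)

lemma sets_borel_cube [measurable]: "cube r \<in> sets borel"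
  by (simp add: cube_eq_cbox)

lemma mem_cube_if_norm_le: "norm x \<le> r \<Longrightarrow> x \<in> cube r"
  unfolding cube_def using Basis_le_norm order_trans by blast

lemma torus_cube_onto:
  assumes r: "r > 0"
  shows "\<exists>y\<in>cube r. torus (pi / r) y = torus (pi / r) x"
proof -
  define k where "k b = \<lfloor>(x \<bullet> b + r) / (2 * r)\<rfloor>" for b
  define y where "y = (\<Sum>b\<in>Basis. (x \<bullet> b - 2 * r * k b) *\<^sub>R b)"
  have yb: "y \<bullet> b = x \<bullet> b - 2 * r * k b" if "b \<in> Basis" for b
    using that by (simp add: y_def inner_sum_Basis_scaleR)
  have "\<bar>y \<bullet> b\<bar> \<le> r" if "b \<in> Basis" for b
  proof -
    have "k b \<le> (x \<bullet> b + r) / (2 * r)" "(x \<bullet> b + r) / (2 * r) < k b + 1"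
      unfolding k_def by linarith+
    then have "2 * r * k b \<le> x \<bullet> b + r" "x \<bullet> b + r < 2 * r * k b + 2 * r"
      using r by (simp_all add: field_simps)
    then show ?thesis
      using yb[OF that] by linarith
  qed
  then have "y \<in> cube r"
    by (simp add: cube_def)
  moreover have "pi / r * (y \<bullet> b) = pi / r * (x \<bullet> b) + 2 * pi * real_of_int (- k b)" if "b \<in> Basis" for b
  proof -
    have "x \<bullet> b = y \<bullet> b + 2 * r * k b"
      using yb[OF that] by simp
    then show ?thesis
      using r by (simp add: field_simps)
  qed
  then have "torus (pi / r) y = torus (pi / r) x"
    unfolding torus_eq_iff by (metis sin_cos_eq_iff)
  ultimately show ?thesis
    by blast
qed

text \<open>Distinct points of the cube with the same image lie on opposite faces.\<close>

lemma torus_cube_identified_norm: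
  assumes r: "r > 0" and x: "x \<in> cube r" and y: "y \<in> cube r"
    and eq: "torus (pi / r) x = torus (pi / r) y" and ne: "x \<noteq> y"
  shows "norm x \<ge> r"
proof -
  obtain b where b: "b \<in> Basis" "x \<bullet> b \<noteq> y \<bullet> b"
    using ne euclidean_eqI by blast
  obtain n :: int where "pi / r * (x \<bullet> b) = pi / r * (y \<bullet> b) + 2 * pi * n"
    using eq b(1) unfolding torus_eq_iff by (metis sin_cos_eq_iff)
  then have "pi * (x \<bullet> b) = pi * (y \<bullet> b + 2 * r * n)"
    using r by (simp add: field_simps)
  then have n: "x \<bullet> b = y \<bullet> b + 2 * r * n"
    by simp
  have xb: "\<bar>x \<bullet> b\<bar> \<le> r" and yb: "\<bar>y \<bullet> b\<bar> \<le> r"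
    using x y b(1) by (auto simp: cube_def)
  have "n \<noteq> 0"
    using n b(2) by auto
  then have "1 \<le> \<bar>real_of_int n\<bar>"
    by linarith
  then have "2 * r \<le> \<bar>x \<bullet> b - y \<bullet> b\<bar>"
    using n r by (simp add: abs_mult)
  then have "\<bar>x \<bullet> b\<bar> = r"
    using xb yb by linarith
  then show ?thesis
    using Basis_le_norm[OF b(1), of x] by auto
qed

lemma torus_factor_continuous:
  fixes u :: "'a::euclidean_space \<Rightarrow> complex"
  assumes r: "r > 0" and uc: "continuous_on UNIV u" and us: "\<And>x. norm x \<ge> r \<Longrightarrow> u x = 0"
  obtains F where "continuous_on (torus (pi/r) ` cube r) F" "\<And>x. x \<in> cube r \<Longrightarrow> F (torus (pi/r) x) = u x"
proof -
  let ?T = "torus (pi/r) :: 'a \<Rightarrow> 'a \<times> 'a"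
  let ?X = "top_of_set (cube r :: 'a set)"
  let ?Y = "top_of_set (?T ` cube r)"
  have cm: "continuous_map ?X ?Y ?T"
    using continuous_on_torus by (simp add: continuous_map_subtopology_eu)
  have "closed_map ?X ?Y ?T"
  proof (rule continuous_imp_closed_map_gen[OF _ _ cm])
    show "compact_space ?X"
      by (simp add: compact_space_subtopology compact_cube)
    show "kc_space ?Y"
      by (simp add: Hausdorff_imp_kc_space Hausdorff_space_subtopology)
  qed
  then have qm: "quotient_map ?X ?Y ?T"
    using cm by (intro continuous_closed_imp_quotient_map) auto
  have hc: "continuous_map ?X euclidean u"
    using uc continuous_on_subset by auto
  have "u x = u y" if "x \<in> cube r" "y \<in> cube r" "?T x = ?T y" for x y
    using torus_cube_identified_norm[OF r, of x y] torus_cube_identified_norm[OF r, of y x] us that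
    by (cases "x = y") auto
  then obtain G where "continuous_map ?Y euclidean G" "\<And>x. x \<in> cube r \<Longrightarrow> G (?T x) = u x"
    using quotient_map_lift_exists[OF qm hc] by (metis topspace_euclidean_subtopology)
  then show ?thesis
    using that by auto
qed

lemma continuous_vanishing_outside_ball_bounded:
  fixes u :: "'a::euclidean_space \<Rightarrow> 'b::real_normed_vector"
  assumes uc: "continuous_on UNIV u" and us: "\<And>x. norm x \<ge> R \<Longrightarrow> u x = 0"
  obtains B where "B > 0" "\<And>x. norm (u x) \<le> B"
proof -
  have "bounded (u ` cball 0 R)"
    by (intro compact_imp_bounded compact_continuous_image continuous_on_subset[OF uc]) auto
  then obtain B where "B > 0" and B: "\<And>x. norm x \<le> R \<Longrightarrow> norm (u x) \<le> B"
    by (auto simp: bounded_pos)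
  moreover have "norm (u x) \<le> B" for x
    using B[of x] us[of x] \<open>B > 0\<close> by (cases "norm x \<le> R") auto
  ultimately show ?thesis
    using that by blast
qed

text \<open>The approximant is periodic with the cube as fundamental domain, which bounds it
  on the whole space.\<close>

lemma trig_poly_approx_on_cube:
  fixes u :: "'a::euclidean_space \<Rightarrow> complex"
  assumes r: "r > 0" and uc: "continuous_on UNIV u" and us: "\<And>x. norm x \<ge> r \<Longrightarrow> u x = 0"
    and B: "\<And>x. norm (u x) \<le> B" and d: "d > 0"
  obtains P where "trig_poly P" "\<And>x. x \<in> cube r \<Longrightarrow> norm (u x - P x) < d"
    "\<And>x. norm (P x) \<le> B + d"
proof -
  let ?T = "torus (pi/r) :: 'a \<Rightarrow> 'a \<times> 'a"
  obtain F where Fc: "continuous_on (?T ` cube r) F" and FT: "\<And>x. x \<in> cube r \<Longrightarrow> F (?T x) = u x"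
    using torus_factor_continuous[OF r uc us] by metis
  have "compact (?T ` cube r)"
    by (intro compact_continuous_image continuous_on_torus compact_cube)
  then obtain p where p: "polynomial_function p" "\<And>z. z \<in> ?T ` cube r \<Longrightarrow> norm (F z - p z) < d"
    using Stone_Weierstrass_polynomial_function[OF _ Fc d] by blast
  have close: "norm (u x - p (?T x)) < d" if "x \<in> cube r" for x
    using p(2) FT that by fastforce
  show ?thesis
  proof (rule that[of "\<lambda>x. p (?T x)"])
    show "trig_poly (\<lambda>x. p (?T x))"
      by (rule trig_poly_polynomial_torus[OF p(1)])
    show "norm (p (?T x)) \<le> B + d" for x
    proof -
      obtain y where "y \<in> cube r" "?T y = ?T x"
        using torus_cube_onto[OF r] by blast
      then show ?thesis
        using norm_triangle_ineq4[of "u y" "u y - p (?T y)"] B[of y] close[of y] by simp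
    qed
  qed (rule close)
qed

definition sq_L2_dist :: "'a measure \<Rightarrow> ('a \<Rightarrow> complex) \<Rightarrow> ('a \<Rightarrow> complex) \<Rightarrow> ennreal" where
  "sq_L2_dist M f g = (\<integral>\<^sup>+x. ennreal (norm (f x - g x))^2 \<partial>M)"

lemma sq_L2_dist_triangle:
  assumes [measurable]: "f \<in> borel_measurable M" "g \<in> borel_measurable M" "h \<in> borel_measurable M"
  shows "sq_L2_dist M f h \<le> 2 * sq_L2_dist M f g + 2 * sq_L2_dist M g h"
proof -
  have "ennreal (norm (f x - h x))^2 \<le> 2 * ennreal (norm (f x - g x))^2 + 2 * ennreal (norm (g x - h x))^2" for x
  proof -
    have "norm (f x - h x) \<le> norm (f x - g x) + norm (g x - h x)"
      using norm_triangle_ineq[of "f x - g x" "g x - h x"] by simp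
    then have "(norm (f x - h x))^2 \<le> (norm (f x - g x) + norm (g x - h x))^2"
      by (intro power_mono) auto
    also have "\<dots> \<le> 2 * (norm (f x - g x))^2 + 2 * (norm (g x - h x))^2"
      using sum_squares_bound[of "norm (f x - g x)" "norm (g x - h x)"] by (simp add: power2_sum)
    finally have "ennreal ((norm (f x - h x))^2) \<le>
        ennreal (2 * (norm (f x - g x))^2 + 2 * (norm (g x - h x))^2)"
      by (rule ennreal_leI)
    then show ?thesis
      by (simp add: ennreal_power ennreal_plus ennreal_mult)
  qed
  then have "sq_L2_dist M f h \<le>
      (\<integral>\<^sup>+x. 2 * ennreal (norm (f x - g x))^2 + 2 * ennreal (norm (g x - h x))^2 \<partial>M)"
    unfolding sq_L2_dist_def by (intro nn_integral_mono)
  also have "\<dots> = 2 * sq_L2_dist M f g + 2 * sq_L2_dist M g h"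
    unfolding sq_L2_dist_def by (simp add: nn_integral_add nn_integral_cmult)
  finally show ?thesis .
qed

lemma sq_L2_dist_triangle3:
  assumes [measurable]: "f \<in> borel_measurable M" "g \<in> borel_measurable M" "h \<in> borel_measurable M"
    "k \<in> borel_measurable M"
    and "sq_L2_dist M f g \<le> ennreal e" "sq_L2_dist M g h \<le> ennreal e" "sq_L2_dist M h k \<le> ennreal e"
  shows "sq_L2_dist M f k \<le> ennreal (10 * e)"
proof -
  have "sq_L2_dist M f k \<le> 2 * sq_L2_dist M f h + 2 * sq_L2_dist M h k"
    by (rule sq_L2_dist_triangle) measurable
  also have "\<dots> \<le> 2 * (2 * sq_L2_dist M f g + 2 * sq_L2_dist M g h) + 2 * sq_L2_dist M h k"
    using sq_L2_dist_triangle[of f M g h] by (intro add_mono mult_left_mono) auto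
  also have "\<dots> \<le> 2 * (2 * ennreal e + 2 * ennreal e) + 2 * ennreal e"
    using assms(5-7) by (intro add_mono mult_left_mono order.refl) simp_all
  also have "\<dots> = (2 * (2 + 2) + 2) * ennreal e"
    by (simp only: distrib_right mult.assoc)
  also have "\<dots> = ennreal (10 * e)"
    by (simp add: ennreal_mult')
  finally show ?thesis .
qed

lemma sq_L2_dist_mult_right_le:
  fixes u v w :: "'a \<Rightarrow> complex"
  assumes [measurable]: "w \<in> borel_measurable M" "S \<in> sets M"
    and in_S: "\<And>x. x \<in> S \<Longrightarrow> norm (u x - v x) \<le> a"
    and off_S: "\<And>x. x \<notin> S \<Longrightarrow> norm (u x - v x) \<le> b"
  shows "sq_L2_dist M (\<lambda>x. u x * w x) (\<lambda>x. v x * w x) \<le>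
    ennreal (a^2) * (\<integral>\<^sup>+x. ennreal (norm (w x))^2 \<partial>M) +
    ennreal (b^2) * (\<integral>\<^sup>+x. ennreal (norm (w x))^2 * indicator (- S) x \<partial>M)"
proof -
  have bound: "ennreal (norm ((u x - v x) * w x))^2 \<le> ennreal (c^2) * ennreal (norm (w x))^2"
    if "norm (u x - v x) \<le> c" for x c
  proof -
    have "(norm ((u x - v x) * w x))^2 \<le> (c * norm (w x))^2"
      using that by (auto simp: norm_mult intro!: power_mono mult_right_mono)
    then show ?thesis
      by (simp add: ennreal_power ennreal_mult[symmetric] power_mult_distrib ennreal_leI)
  qed
  have "ennreal (norm (u x * w x - v x * w x))^2 \<le>
      ennreal (a^2) * ennreal (norm (w x))^2 + ennreal (b^2) * (ennreal (norm (w x))^2 * indicator (- S) x)" for x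
    using bound[OF in_S, of x] bound[OF off_S, of x]
    by (cases "x \<in> S") (auto simp: left_diff_distrib intro: add_increasing add_increasing2)
  then have "sq_L2_dist M (\<lambda>x. u x * w x) (\<lambda>x. v x * w x) \<le>
      (\<integral>\<^sup>+x. ennreal (a^2) * ennreal (norm (w x))^2 +
        ennreal (b^2) * (ennreal (norm (w x))^2 * indicator (- S) x) \<partial>M)"
    unfolding sq_L2_dist_def by (intro nn_integral_mono)
  also have "\<dots> = ennreal (a^2) * (\<integral>\<^sup>+x. ennreal (norm (w x))^2 \<partial>M) +
      ennreal (b^2) * (\<integral>\<^sup>+x. ennreal (norm (w x))^2 * indicator (- S) x \<partial>M)"
    by (simp add: nn_integral_add nn_integral_cmult)
  finally show ?thesis .
qed

lemma L2_tail_outside_cube_small: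
  fixes w :: "'a::euclidean_space \<Rightarrow> complex"
  assumes [measurable]: "w \<in> borel_measurable lborel"
    and wL2: "(\<integral>\<^sup>+x. ennreal (norm (w x))^2 \<partial>lborel) < \<infinity>" and "\<eta> > 0"
  obtains r where "r \<ge> R" "r > 0"
    "(\<integral>\<^sup>+x. ennreal (norm (w x))^2 * indicator (- cube r) x \<partial>lborel) < ennreal \<eta>"
proof -
  let ?tail = "\<lambda>k::nat. \<integral>\<^sup>+x. ennreal (norm (w x))^2 * indicator (- cube (real k)) x \<partial>lborel"
  have "?tail \<longlonglongrightarrow> (\<integral>\<^sup>+x. 0 \<partial>(lborel::'a measure))"
  proof (rule nn_integral_dominated_convergence[where w="\<lambda>x. ennreal (norm (w x))^2"])
    show "AE x in lborel. (\<lambda>k. ennreal (norm (w x))^2 * indicator (- cube (real k)) x) \<longlonglongrightarrow> 0"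
    proof (rule AE_I2, rule tendsto_eventually)
      fix x :: 'a
      show "\<forall>\<^sub>F k in sequentially. ennreal (norm (w x))^2 * indicator (- cube (real k)) x = 0"
      proof (rule eventually_sequentiallyI[of "nat \<lceil>norm x\<rceil>"])
        fix k assume "nat \<lceil>norm x\<rceil> \<le> k"
        then have "x \<in> cube (real k)"
          by (intro mem_cube_if_norm_le) linarith
        then show "ennreal (norm (w x))^2 * indicator (- cube (real k)) x = 0"
          by simp
      qed
    qed
  qed (use wL2 in \<open>auto split: split_indicator\<close>)
  then have "\<forall>\<^sub>F k in sequentially. ?tail k < ennreal \<eta>"
    using \<open>\<eta> > 0\<close> by (intro order_tendstoD(2)) auto
  moreover have "\<forall>\<^sub>F k in sequentially. max R 1 \<le> real k"
    using filterlim_real_sequentially unfolding filterlim_at_top by blast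
  ultimately obtain k where "?tail k < ennreal \<eta>" "max R 1 \<le> real k"
    using eventually_conj eventually_sequentially by (metis (no_types, lifting) order_refl)
  then show ?thesis
    using that[of "real k"] by auto
qed

lemma L2_approx_compact_support_trig_poly_times:
  fixes u w :: "'a::euclidean_space \<Rightarrow> complex"
  assumes uc: "continuous_on UNIV u" and us: "\<And>x. norm x \<ge> R \<Longrightarrow> u x = 0"
    and [measurable]: "w \<in> borel_measurable lborel"
    and wL2: "(\<integral>\<^sup>+x. ennreal (norm (w x))^2 \<partial>lborel) < \<infinity>" and "\<delta> > 0"
  obtains P where "trig_poly P" "sq_L2_dist lborel (\<lambda>x. u x * w x) (\<lambda>x. P x * w x) < ennreal \<delta>"
proof -
  obtain B where B: "B > 0" "\<And>x. norm (u x) \<le> B"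
    using continuous_vanishing_outside_ball_bounded[OF uc us] by blast
  obtain W where W: "W \<ge> 0" "(\<integral>\<^sup>+x. ennreal (norm (w x))^2 \<partial>lborel) = ennreal W"
    using wL2 by (cases "\<integral>\<^sup>+x. ennreal (norm (w x))^2 \<partial>lborel") auto
  define d where "d = sqrt (\<delta> / (2 * (W + 1)))"
  have d: "d > 0" and dW: "d^2 * W \<le> \<delta> / 2"
    using \<open>\<delta> > 0\<close> W by (simp_all add: d_def field_simps)
  define \<eta> where "\<eta> = \<delta> / (2 * (B + d)^2)"
  obtain r where r: "r \<ge> R" "r > 0"
    and "(\<integral>\<^sup>+x. ennreal (norm (w x))^2 * indicator (- cube r) x \<partial>lborel) < ennreal \<eta>"
    using L2_tail_outside_cube_small[of w \<eta> R] wL2 B d \<open>\<delta> > 0\<close> by (auto simp: \<eta>_def)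
  then obtain t where t: "t \<ge> 0" "t < \<eta>"
    "(\<integral>\<^sup>+x. ennreal (norm (w x))^2 * indicator (- cube r) x \<partial>lborel) = ennreal t"
    by (cases "\<integral>\<^sup>+x. ennreal (norm (w x))^2 * indicator (- cube r) x \<partial>lborel")
      (auto simp: ennreal_less_iff)
  have u_far: "u x = 0" if "norm x \<ge> r" for x
    using us r(1) that by simp
  obtain P where P: "trig_poly P" "\<And>x. x \<in> cube r \<Longrightarrow> norm (u x - P x) < d"
    "\<And>x. norm (P x) \<le> B + d"
    using trig_poly_approx_on_cube[OF r(2) uc u_far B(2) d] by blast
  have "u x = 0" if "x \<notin> cube r" for x
    using u_far mem_cube_if_norm_le that by (meson le_cases)
  then have "sq_L2_dist lborel (\<lambda>x. u x * w x) (\<lambda>x. P x * w x) \<le>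
      ennreal (d^2) * ennreal W + ennreal ((B + d)^2) * ennreal t"
    unfolding W(2)[symmetric] t(3)[symmetric]
    using P by (intro sq_L2_dist_mult_right_le) (simp_all add: less_imp_le sets_borel_cube)
  also have "\<dots> = ennreal (d^2 * W + (B + d)^2 * t)"
    using W t by (simp add: ennreal_mult ennreal_plus)
  also have "\<dots> < ennreal \<delta>"
  proof (rule ennreal_lessI[OF \<open>\<delta> > 0\<close>])
    have "(B + d)^2 * t < (B + d)^2 * \<eta>"
      using t B d by (intro mult_strict_left_mono) auto
    also have "\<dots> = \<delta> / 2"
      using B d by (simp add: \<eta>_def)
    finally show "d^2 * W + (B + d)^2 * t < \<delta>"
      using dW by linarith
  qed
  finally show ?thesis
    using that P(1) by blast
qed

lemma L2_approx_truncation: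
  fixes f :: "'a::euclidean_space \<Rightarrow> complex"
  assumes [measurable]: "f \<in> borel_measurable lborel"
    and fL2: "(\<integral>\<^sup>+x. ennreal (norm (f x))^2 \<partial>lborel) < \<infinity>" and "e > 0"
  obtains n :: nat where
    "sq_L2_dist lborel f (\<lambda>x. if norm x \<le> n \<and> norm (f x) \<le> n then f x else 0) < ennreal e"
proof -
  let ?u = "\<lambda>(n::nat) x. ennreal (norm (f x - (if norm x \<le> n \<and> norm (f x) \<le> n then f x else 0)))^2"
  have "(\<lambda>n. \<integral>\<^sup>+x. ?u n x \<partial>lborel) \<longlonglongrightarrow> (\<integral>\<^sup>+x. 0 \<partial>(lborel::'a measure))"
  proof (rule nn_integral_dominated_convergence[where w="\<lambda>x. ennreal (norm (f x))^2"])
    show "AE x in lborel. (\<lambda>n. ?u n x) \<longlonglongrightarrow> 0"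
    proof (rule AE_I2, rule tendsto_eventually)
      fix x :: 'a
      show "\<forall>\<^sub>F n in sequentially. ?u n x = 0"
      proof (rule eventually_sequentiallyI[of "nat \<lceil>max (norm x) (norm (f x))\<rceil>"])
        fix n assume "nat \<lceil>max (norm x) (norm (f x))\<rceil> \<le> n"
        then have "norm x \<le> real n" "norm (f x) \<le> real n"
          by linarith+
        then show "?u n x = 0"
          by simp
      qed
    qed
  qed (use fL2 in \<open>auto simp: ennreal_power\<close>)
  then have "\<forall>\<^sub>F n in sequentially. (\<integral>\<^sup>+x. ?u n x \<partial>lborel) < ennreal e"
    using \<open>e > 0\<close> by (intro order_tendstoD(2)) auto
  then show ?thesis
    using that eventually_sequentially unfolding sq_L2_dist_def by (metis (no_types, lifting) order_refl)
qed

definition clip_complex :: "real \<Rightarrow> complex \<Rightarrow> complex" where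
  "clip_complex n z = Complex (max (- n) (min n (Re z))) (max (- n) (min n (Im z)))"

lemma continuous_on_clip_complex [continuous_intros]:
  "continuous_on S f \<Longrightarrow> continuous_on S (\<lambda>x. clip_complex n (f x))"
  unfolding clip_complex_def Complex_eq by (intro continuous_intros)

lemma tendsto_clip_complex [tendsto_intros]:
  "(f \<longlongrightarrow> z) F \<Longrightarrow> ((\<lambda>x. clip_complex n (f x)) \<longlongrightarrow> clip_complex n z) F"
  unfolding clip_complex_def Complex_eq by (intro tendsto_intros)

lemma clip_complex_id: "norm z \<le> n \<Longrightarrow> clip_complex n z = z"
  using abs_Re_le_cmod[of z] abs_Im_le_cmod[of z]
  by (simp add: clip_complex_def complex_eq_iff abs_le_iff max_def min_def)

lemma norm_clip_complex_le:
  assumes "n \<ge> 0"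
  shows "norm (clip_complex n z) \<le> 2 * n"
proof -
  have clip: "\<bar>max (- n) (min n a)\<bar> \<le> n" for a
    using assms by linarith
  have "norm (clip_complex n z) \<le> \<bar>max (- n) (min n (Re z))\<bar> + \<bar>max (- n) (min n (Im z))\<bar>"
    using cmod_le[of "clip_complex n z"] by (simp add: clip_complex_def)
  then show ?thesis
    using clip[of "Re z"] clip[of "Im z"] by linarith
qed

lemma sq_L2_dist_bounded_convergence:
  fixes h :: "'a::euclidean_space \<Rightarrow> complex" and G :: "nat \<Rightarrow> 'a \<Rightarrow> complex"
  assumes [measurable]: "h \<in> borel_measurable lborel" "\<And>k. G k \<in> borel_measurable lborel"
    and lim: "AE x in lborel. (\<lambda>k. G k x) \<longlonglongrightarrow> h x"
    and bound: "\<And>k x. norm (h x - G k x) \<le> C"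
    and supp: "\<And>k x. norm x > R \<Longrightarrow> G k x = h x"
  shows "(\<lambda>k. sq_L2_dist lborel h (G k)) \<longlonglongrightarrow> 0"
proof -
  let ?w = "\<lambda>x. ennreal (C^2) * indicator (cball (0::'a) R) x"
  have "(\<lambda>k. sq_L2_dist lborel h (G k)) \<longlonglongrightarrow> (\<integral>\<^sup>+x. 0 \<partial>(lborel::'a measure))"
    unfolding sq_L2_dist_def
  proof (rule nn_integral_dominated_convergence[where w="?w"])
    show "AE x in lborel. ennreal (norm (h x - G k x))^2 \<le> ?w x" for k
    proof (rule AE_I2)
      fix x :: 'a
      have "(norm (h x - G k x))^2 \<le> C^2"
        using bound[where k=k and x=x] by (intro power_mono) auto
      then show "ennreal (norm (h x - G k x))^2 \<le> ?w x"
        using supp[where k=k and x=x] by (cases "norm x \<le> R") (auto simp: ennreal_power ennreal_leI)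
    qed
    show "(\<integral>\<^sup>+x. ?w x \<partial>lborel) < \<infinity>"
      using emeasure_lborel_cball_finite[of "0::'a" R]
      by (subst nn_integral_cmult_indicator)
        (auto simp: ennreal_mult_less_top top.not_eq_extremum infinity_ennreal_def)
    show "AE x in lborel. (\<lambda>k. ennreal (norm (h x - G k x))^2) \<longlonglongrightarrow> 0"
      using lim
    proof (rule AE_mp, intro AE_I2 impI)
      fix x assume "(\<lambda>k. G k x) \<longlonglongrightarrow> h x"
      then have "(\<lambda>k. (norm (h x - G k x))^2) \<longlonglongrightarrow> (norm (h x - h x))^2"
        by (intro tendsto_intros)
      then have "(\<lambda>k. ennreal ((norm (h x - G k x))^2)) \<longlonglongrightarrow> ennreal 0"
        by (intro tendsto_ennrealI) simp
      then show "(\<lambda>k. ennreal (norm (h x - G k x))^2) \<longlonglongrightarrow> 0"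
        by (simp add: ennreal_power)
    qed
    show "(\<lambda>x. ennreal (norm (h x - G k x))^2) \<in> borel_measurable lborel" for k
      by measurable
    show "?w \<in> borel_measurable lborel"
      by (intro borel_measurable_times_ennreal borel_measurable_const borel_measurable_indicator)
        (simp add: borel_closed)
  qed simp
  then show ?thesis
    by simp
qed

text \<open>Lusin-type step: a Borel function is an a.e. limit of continuous functions, and clipping
  and cutting these off keeps them uniformly bounded with common support.\<close>

lemma L2_approx_bounded_by_continuous:
  fixes h :: "'a::euclidean_space \<Rightarrow> complex"
  assumes hm [measurable]: "h \<in> borel_measurable lborel" and hb: "\<And>x. norm (h x) \<le> n"
    and hs: "\<And>x. norm x > n \<Longrightarrow> h x = 0" and "e > 0"
  obtains g where "continuous_on UNIV g" "\<And>x. norm x \<ge> n + 1 \<Longrightarrow> g x = 0"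
    "sq_L2_dist lborel h g < ennreal e"
proof -
  have n: "n \<ge> 0"
    using hb[of 0] norm_ge_zero order_trans by blast
  have "h measurable_on UNIV"
    using measurable_completion[OF hm]
    by (subst measurable_on_iff_borel_measurable) (auto simp: lebesgue_on_UNIV_eq)
  then obtain N c where N: "negligible N" and cc: "\<And>k. continuous_on UNIV (c k)"
    and clim: "\<And>x. x \<notin> N \<Longrightarrow> (\<lambda>k. c k x) \<longlonglongrightarrow> h x"
    unfolding measurable_on_def by auto
  define cutoff where "cutoff x = max 0 (min 1 (n + 1 - norm x))" for x :: 'a
  define G where "G k x = of_real (cutoff x) * clip_complex n (c k x)" for k x
  have Gc: "continuous_on UNIV (G k)" for k
    unfolding G_def cutoff_def by (intro continuous_intros cc)
  have Gs: "norm x \<ge> n + 1 \<Longrightarrow> G k x = 0" for k x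
    by (simp add: G_def cutoff_def)
  have [measurable]: "G k \<in> borel_measurable lborel" for k
    using Gc by (simp add: borel_measurable_continuous_onI)
  have h_eq: "of_real (cutoff x) * clip_complex n (h x) = h x" for x
    using hb[of x] hs[of x] clip_complex_id[of "h x" n] n
    by (cases "norm x \<le> n") (auto simp: cutoff_def)
  have "AE x in lebesgue. x \<notin> N"
    using N by (simp add: negligible_iff_null_sets AE_not_in)
  then have "AE x in lborel. x \<notin> N"
    by (simp add: AE_completion_iff)
  then have "AE x in lborel. (\<lambda>k. G k x) \<longlonglongrightarrow> h x"
  proof (rule AE_mp, intro AE_I2 impI)
    fix x assume "x \<notin> N"
    then have "(\<lambda>k. G k x) \<longlonglongrightarrow> of_real (cutoff x) * clip_complex n (h x)"
      unfolding G_def by (intro tendsto_intros clim)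
    then show "(\<lambda>k. G k x) \<longlonglongrightarrow> h x"
      by (simp only: h_eq)
  qed
  moreover have "norm (h x - G k x) \<le> 3 * n" for k x
  proof -
    have "norm (G k x) \<le> 1 * (2 * n)"
      unfolding G_def norm_mult using norm_clip_complex_le[OF n]
      by (intro mult_mono) (auto simp: cutoff_def)
    then show ?thesis
      using norm_triangle_ineq4[of "h x" "G k x"] hb[of x] by linarith
  qed
  moreover have "G k x = h x" if "norm x > n + 1" for k x
    using Gs[of x k] hs[of x] that by simp
  ultimately have "(\<lambda>k. sq_L2_dist lborel h (G k)) \<longlonglongrightarrow> 0"
    by (intro sq_L2_dist_bounded_convergence) auto
  then have "\<forall>\<^sub>F k in sequentially. sq_L2_dist lborel h (G k) < ennreal e"
    using \<open>e > 0\<close> by (intro order_tendstoD(2)) auto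
  then obtain k where "sq_L2_dist lborel h (G k) < ennreal e"
    by (auto simp: eventually_sequentially)
  then show ?thesis
    by (intro that[of "G k"] Gc Gs)
qed

lemma L2_dense_trig_poly_times:
  fixes f w :: "'a::euclidean_space \<Rightarrow> complex"
  assumes fm [measurable]: "f \<in> borel_measurable lborel"
    and fL2: "(\<integral>\<^sup>+x. ennreal (norm (f x))^2 \<partial>lborel) < \<infinity>"
    and wc: "continuous_on UNIV w" and wnz: "\<And>x. w x \<noteq> 0"
    and wL2: "(\<integral>\<^sup>+x. ennreal (norm (w x))^2 \<partial>lborel) < \<infinity>" and e: "e > 0"
  obtains P where "trig_poly P" "sq_L2_dist lborel f (\<lambda>x. P x * w x) < ennreal e"
proof -
  have wm [measurable]: "w \<in> borel_measurable lborel"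
    using wc by (simp add: borel_measurable_continuous_onI)
  have e': "e / 20 > 0"
    using e by simp
  obtain n :: nat
    where fh: "sq_L2_dist lborel f (\<lambda>x. if norm x \<le> n \<and> norm (f x) \<le> n then f x else 0) < ennreal (e / 20)"
    using L2_approx_truncation[OF fm fL2 e'] by blast
  define h where "h x = (if norm x \<le> n \<and> norm (f x) \<le> n then f x else 0)" for x
  have hm [measurable]: "h \<in> borel_measurable lborel"
    unfolding h_def by measurable
  have hb: "norm (h x) \<le> n" and hs: "norm x > n \<Longrightarrow> h x = 0" for x
    by (simp_all add: h_def)
  obtain g where gc: "continuous_on UNIV g" and gs: "\<And>x. norm x \<ge> real n + 1 \<Longrightarrow> g x = 0"
    and hg: "sq_L2_dist lborel h g < ennreal (e / 20)"
    using L2_approx_bounded_by_continuous[OF hm hb hs e'] by blast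
  have gwc: "continuous_on UNIV (\<lambda>x. g x / w x)"
    using gc wc wnz by (intro continuous_intros) auto
  have gws: "g x / w x = 0" if "norm x \<ge> real n + 1" for x
    using gs that by simp
  have g_eq: "(\<lambda>x. g x / w x * w x) = g"
    using wnz by simp
  obtain P where P: "trig_poly P" and gP: "sq_L2_dist lborel g (\<lambda>x. P x * w x) < ennreal (e / 20)"
    using L2_approx_compact_support_trig_poly_times[OF gwc gws wm wL2 e'] unfolding g_eq by blast
  have gm: "g \<in> borel_measurable lborel" and Pwm: "(\<lambda>x. P x * w x) \<in> borel_measurable lborel"
    using gc wc continuous_on_trig_poly[OF P]
    by (auto intro!: borel_measurable_continuous_onI continuous_intros)
  have "sq_L2_dist lborel f h \<le> ennreal (e / 20)"
    using fh unfolding h_def[abs_def] by simp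
  then have "sq_L2_dist lborel f (\<lambda>x. P x * w x) \<le> ennreal (10 * (e / 20))"
    using hg gP by (intro sq_L2_dist_triangle3[OF fm hm gm Pwm]) simp_all
  also have "\<dots> < ennreal e"
    using e by (intro ennreal_lessI) auto
  finally show ?thesis
    using that P by blast
qed

text \<open>The degenerate constants 0 and \<infinity> make the zero function a perfect approximant.\<close>

lemma sq_L2_dist_density_const_approx:
  fixes f :: "'a \<Rightarrow> complex"
  assumes [measurable]: "f \<in> borel_measurable M"
    and A: "A \<subseteq> borel_measurable M" "(\<lambda>_. 0) \<in> A"
    and fL2: "(\<integral>\<^sup>+x. ennreal (norm (f x))^2 \<partial>density M (\<lambda>_. C)) < \<infinity>"
    and approx: "\<And>e. 0 < C \<Longrightarrow> C < \<infinity> \<Longrightarrow> (\<integral>\<^sup>+x. ennreal (norm (f x))^2 \<partial>M) < \<infinity> \<Longrightarrow> e > 0 \<Longrightarrow>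
      \<exists>g\<in>A. sq_L2_dist M f g < ennreal e"
    and "\<epsilon> > 0"
  shows "\<exists>g\<in>A. sq_L2_dist (density M (\<lambda>_. C)) f g < ennreal \<epsilon>"
proof -
  have scale: "sq_L2_dist (density M (\<lambda>_. C)) f g = C * sq_L2_dist M f g" if "g \<in> A" for g
    using that A(1) unfolding sq_L2_dist_def by (auto simp: nn_integral_density nn_integral_cmult)
  have fL2': "C * (\<integral>\<^sup>+x. ennreal (norm (f x))^2 \<partial>M) < \<infinity>"
    using fL2 by (simp add: nn_integral_density nn_integral_cmult)
  consider "C = 0" | "C = \<infinity>" | c where "c > 0" "C = ennreal c"
  proof (cases C rule: ennreal_cases)
    case (real r)
    then show ?thesis
      using that by (cases "r = 0") auto
  qed auto
  then show ?thesis
  proof cases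
    case 1
    then show ?thesis
      using scale[OF A(2)] A(2) \<open>\<epsilon> > 0\<close> by force
  next
    case 2
    then have "sq_L2_dist M f (\<lambda>_. 0) = 0"
      using fL2' by (auto simp: sq_L2_dist_def ennreal_top_mult split: if_splits)
    then show ?thesis
      using scale[OF A(2)] A(2) \<open>\<epsilon> > 0\<close> by force
  next
    case 3
    then have "(\<integral>\<^sup>+x. ennreal (norm (f x))^2 \<partial>M) < \<infinity>"
      using fL2' by (auto simp: ennreal_mult_less_top)
    then obtain g where g: "g \<in> A" "sq_L2_dist M f g < ennreal (\<epsilon> / c)"
      using approx[of "\<epsilon> / c"] 3 \<open>\<epsilon> > 0\<close> by auto
    have "sq_L2_dist (density M (\<lambda>_. C)) f g < ennreal c * ennreal (\<epsilon> / c)"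
      using scale[OF g(1)] g(2) 3 by (simp add: ennreal_mult_strict_left_mono)
    also have "\<dots> = ennreal \<epsilon>"
      using 3 \<open>\<epsilon> > 0\<close> by (simp add: ennreal_mult[symmetric])
    finally show ?thesis
      using g(1) by blast
  qed
qed

lemma linear_projection_along:
  fixes A B :: "'a::real_vector set"
  assumes A: "subspace A" and B: "subspace B" and AB: "A \<inter> B = {0}"
    and sum: "\<And>x. \<exists>a\<in>A. \<exists>b\<in>B. x = a + b"
  obtains p where "linear p" "\<And>x. p x \<in> A" "\<And>x. x - p x \<in> B"
proof -
  define p where "p x = (SOME a. a \<in> A \<and> x - a \<in> B)" for x
  have p: "p x \<in> A \<and> x - p x \<in> B" for x
  proof -
    obtain a b where "a \<in> A" "b \<in> B" "x = a + b"
      using sum by blast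
    then have "\<exists>a. a \<in> A \<and> x - a \<in> B"
      by force
    then show ?thesis
      unfolding p_def by (rule someI_ex)
  qed
  have p_unique: "p x = a" if "a \<in> A" "x - a \<in> B" for x a
  proof -
    have "p x - a \<in> A"
      using p that subspace_diff[OF A] by blast
    moreover have "p x - a = (x - a) - (x - p x)"
      by simp
    then have "p x - a \<in> B"
      using p that subspace_diff[OF B] by metis
    ultimately have "p x - a = 0"
      using AB by blast
    then show ?thesis
      by simp
  qed
  have "linear p"
  proof
    fix x y
    have "x + y - (p x + p y) = (x - p x) + (y - p y)"
      by simp
    then show "p (x + y) = p x + p y"
      using p subspace_add[OF A] subspace_add[OF B] by (metis p_unique)
  next
    fix c x
    have "c *\<^sub>R x - c *\<^sub>R p x = c *\<^sub>R (x - p x)"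
      by (simp add: scaleR_diff_right)
    then show "p (c *\<^sub>R x) = c *\<^sub>R p x"
      using p subspace_scale[OF A] subspace_scale[OF B] by (metis p_unique)
  qed
  then show ?thesis
    using that p by blast
qed

locale schroedinger_setting =
  fixes bl :: "'l::euclidean_space \<Rightarrow> 'l \<Rightarrow> real"
    and J :: "'l \<Rightarrow> 'l"
    and q :: "'l \<Rightarrow> 'q::euclidean_space"
  assumes bil: "bilinear bl"
    and dsum_int: "Mset bl \<inter> Nset bl = {0}"
    and dsum_span: "\<forall>x. \<exists>m\<in>Mset bl. \<exists>n\<in>Nset bl. x = m + n"
    and q_lin: "linear q" and q_surj: "surj q"
    and q_ker: "\<forall>x. q x = 0 \<longleftrightarrow> x \<in> Mset bl"
    and J_lin: "linear J" and J_sq: "\<forall>x. J (J x) = - x"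
    and J_omega: "\<forall>x y. omega bl (J x) (J y) = omega bl x y"
    and g_pos: "\<forall>x. x \<noteq> 0 \<longrightarrow> gform bl J x x > 0"
begin

abbreviation "M \<equiv> Mset bl"
abbreviation "N \<equiv> Nset bl"
abbreviation "g \<equiv> gform bl J"
abbreviation "j \<equiv> jmap bl J q"

sublocale bl: bounded_bilinear bl
  using bil by (simp add: bilinear_conv_bounded_bilinear)

sublocale J: bounded_linear J
  using J_lin by (simp add: linear_conv_bounded_linear)

sublocale q: linear q
  by (rule q_lin)

lemma subspace_M: "subspace M"
  by (auto simp: subspace_def Mset_def bl.add_right bl.scaleR_right bl.zero_right)

lemma subspace_N: "subspace N"
  by (auto simp: subspace_def Nset_def bl.add_left bl.scaleR_left bl.zero_left)

lemma omega_M: "x \<in> M \<Longrightarrow> y \<in> M \<Longrightarrow> omega bl x y = 0"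
  by (simp add: Mset_def omega_def)

lemma omega_N: "x \<in> N \<Longrightarrow> y \<in> N \<Longrightarrow> omega bl x y = 0"
  by (simp add: Nset_def omega_def)

lemma eq_0_if_g_self_eq_0: "g x x = 0 \<Longrightarrow> x = 0"
  using g_pos by force

lemma M_JM_eq_0: "x \<in> M \<Longrightarrow> J x \<in> M \<Longrightarrow> x = 0"
  by (rule eq_0_if_g_self_eq_0) (simp add: gform_def omega_M)

lemma M_plus_JM: "\<exists>m\<in>M. \<exists>m'\<in>M. x = m + J m'"
proof -
  obtain p where p: "linear p" "\<And>x. p x \<in> M" "\<And>x. x - p x \<in> N"
    using linear_projection_along[OF subspace_M subspace_N dsum_int] dsum_span by blast
  define S where "S x = p x + J (p (J x))" for x
  have "linear S"
    unfolding S_def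
    by (intro linear_compose_add p(1) linear_compose[OF linear_compose[OF J_lin p(1)] J_lin, unfolded o_def])
  moreover have "x = 0" if "S x = 0" for x
  proof -
    have "J (p (J x)) = - p x"
      using that by (simp add: S_def eq_neg_iff_add_eq_0 add.commute)
    then have "J (p (J x)) \<in> M"
      using p(2) subspace_M subspace_neg by metis
    then have "p (J x) = 0"
      using M_JM_eq_0 p(2) by blast
    then have "p x = 0"
      using \<open>J (p (J x)) = - p x\<close> by simp
    then have "x \<in> N" "J x \<in> N"
      using p(3)[of x] p(3)[of "J x"] \<open>p (J x) = 0\<close> by simp_all
    then show "x = 0"
      by (intro eq_0_if_g_self_eq_0) (simp add: gform_def omega_N)
  qed
  ultimately have "surj S"
    by (intro linear_inj_imp_surj) (auto simp: linear_injective_0)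
  then obtain y where "x = S y"
    by blast
  then show ?thesis
    unfolding S_def using p(2) by blast
qed

lemma subspace_JM: "subspace (J ` M)"
  using J_lin subspace_M by (rule real_vector.linear_subspace_image)

lemma JM_inter_M: "J ` M \<inter> M = {0}"
proof (intro equalityI subsetI)
  fix y assume "y \<in> J ` M \<inter> M"
  then obtain m where "m \<in> M" "J m \<in> M" "y = J m"
    by auto
  then have "m = 0"
    using M_JM_eq_0 by blast
  then show "y \<in> {0}"
    using \<open>y = J m\<close> by simp
next
  fix y :: 'l assume "y \<in> {0}"
  then show "y \<in> J ` M \<inter> M"
    using subspace_0[OF subspace_M] J.zero by force
qed

lemma jmap_props: "linear j" "q (j \<phi>) = \<phi>" "j \<phi> \<in> J ` M"
proof -
  have "\<exists>a\<in>J ` M. \<exists>b\<in>M. x = a + b" for x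
    using M_plus_JM[of x] by (auto simp: add.commute)
  then obtain p where p: "linear p" "\<And>x. p x \<in> J ` M" "\<And>x. x - p x \<in> M"
    using linear_projection_along[OF subspace_JM subspace_M JM_inter_M] by blast
  obtain s where s: "linear s" "\<And>\<phi>. q (s \<phi>) = \<phi>"
    using linear_surjective_right_inverse[OF q_lin q_surj] by (metis comp_apply id_apply)
  have "q (p (s \<phi>)) = \<phi>" for \<phi>
    using p(3)[of "s \<phi>"] q_ker s(2) q.diff by (metis eq_iff_diff_eq_0)
  then have j_ok: "linear (p \<circ> s) \<and> (\<forall>\<phi>. q ((p \<circ> s) \<phi>) = \<phi>) \<and> range (p \<circ> s) \<subseteq> J ` M"
    using p s linear_compose by auto
  have "j = p \<circ> s"
    unfolding jmap_def
  proof (rule the_equality)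
    fix j' assume j': "linear j' \<and> (\<forall>\<phi>. q (j' \<phi>) = \<phi>) \<and> range j' \<subseteq> J ` M"
    show "j' = p \<circ> s"
    proof
      fix \<phi>
      have "j' \<phi> - (p \<circ> s) \<phi> \<in> J ` M"
        using j' j_ok subspace_JM by (blast intro: subspace_diff)
      moreover have "q (j' \<phi> - (p \<circ> s) \<phi>) = 0"
        using j' j_ok q.diff by simp
      then have "j' \<phi> - (p \<circ> s) \<phi> \<in> M"
        using q_ker by blast
      ultimately have "j' \<phi> - (p \<circ> s) \<phi> = 0"
        using JM_inter_M by blast
      then show "j' \<phi> = (p \<circ> s) \<phi>"
        by simp
    qed
  qed (rule j_ok)
  then show "linear j" "q (j \<phi>) = \<phi>" "j \<phi> \<in> J ` M"
    using j_ok by auto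
qed

lemma linear_g_left: "linear (\<lambda>x. g x y)"
  by (rule linearI) (simp_all add: gform_def omega_def bl.add_left bl.add_right bl.scaleR_left
      bl.scaleR_right field_simps)

lemma linear_g_right: "linear (\<lambda>y. g x y)"
  by (rule linearI) (simp_all add: gform_def omega_def bl.add_left bl.add_right bl.scaleR_left
      bl.scaleR_right J.add J.scaleR field_simps)

lemma g_jmap_represents_inner: "\<exists>\<psi>. \<forall>\<phi>. g (j \<phi>) (j \<psi>) = \<phi> \<bullet> v"
proof -
  interpret jl: linear j
    by (rule jmap_props(1))
  define H where "H \<psi> = (\<Sum>b\<in>Basis. g (j b) (j \<psi>) *\<^sub>R b)" for \<psi>
  have H_inner: "\<phi> \<bullet> H \<psi> = g (j \<phi>) (j \<psi>)" for \<phi> \<psi>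
  proof -
    have "g (j \<phi>) (j \<psi>) = g (\<Sum>b\<in>Basis. (\<phi> \<bullet> b) *\<^sub>R j b) (j \<psi>)"
      by (subst euclidean_representation[symmetric, of \<phi>]) (simp add: jl.sum jl.scale)
    also have "\<dots> = (\<Sum>b\<in>Basis. (\<phi> \<bullet> b) * g (j b) (j \<psi>))"
      by (simp add: linear_sum[OF linear_g_left] linear_scale[OF linear_g_left])
    finally show ?thesis
      by (simp add: H_def inner_sum_right mult.commute)
  qed
  have "linear H"
    unfolding H_def
    by (rule linearI) (simp_all add: jl.add jl.scale linear_add[OF linear_g_right]
        linear_scale[OF linear_g_right] scaleR_add_left sum.distrib scaleR_sum_right)
  moreover have "\<psi> = 0" if "H \<psi> = 0" for \<psi>
  proof -
    have "g (j \<psi>) (j \<psi>) = 0"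
      using H_inner[of \<psi> \<psi>] that by simp
    then have "j \<psi> = 0"
      by (rule eq_0_if_g_self_eq_0)
    then show ?thesis
      using jmap_props(2)[of \<psi>] q.zero by simp
  qed
  ultimately obtain \<psi> where "H \<psi> = v"
    using linear_inj_imp_surj linear_injective_0 by (metis surjD)
  then show ?thesis
    using H_inner by metis
qed

definition weight :: "'q \<Rightarrow> complex" where
  "weight \<phi> = exp (\<i> / 2 * of_real (bl (j \<phi>) (j \<phi>)) - of_real (g (j \<phi>) (j \<phi>) / 2))"

text \<open>For \<tau> \<in> M the kernel is a character of Q times a fixed weight: j (q \<tau>) = 0 kills the
  last term of B, and the isotropy of M makes the exponent linear in \<phi> purely imaginary.\<close>

lemma cnj_Bfun_eq:
  assumes \<tau>: "\<tau> = - J (j \<psi>)"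
  shows "cnj (Bfun bl J q \<tau> \<phi>) =
    exp (of_real (g \<tau> \<tau> / 4)) * (exp (\<i> * of_real (g (j \<phi>) (j \<psi>))) * weight \<phi>)"
proof -
  obtain a where a: "a \<in> M" "j \<phi> = J a"
    using jmap_props(3)[of \<phi>] by blast
  obtain b where b: "b \<in> M" "j \<psi> = J b"
    using jmap_props(3)[of \<psi>] by blast
  have \<tau>b: "\<tau> = b"
    using \<tau> b J_sq by simp
  have jq: "j (q \<tau>) = 0"
    using \<tau>b b q_ker linear_0[OF jmap_props(1)] by metis
  have c0: "cbr bl J 0 \<tau> = 0"
    by (simp add: cbr_def gform_def omega_def bl.zero_left bl.zero_right)
  have "g (j \<phi>) \<tau> = 0"
    using a b \<tau>b J_omega by (simp add: gform_def omega_M)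
  moreover have "g (j \<phi>) (j \<psi>) = - 2 * omega bl (j \<phi>) \<tau>"
    using a b \<tau>b J_sq by (simp add: gform_def omega_def bl.minus_left bl.minus_right)
  ultimately have cb: "cbr bl J (j \<phi>) \<tau> = - \<i> * of_real (g (j \<phi>) (j \<psi>))"
    unfolding cbr_def by simp
  have Bf: "Bfun bl J q \<tau> \<phi> = exp (- \<i> * of_real (g (j \<phi>) (j \<psi>))
      - (\<i> / 2) * of_real (bl (j \<phi>) (j \<phi>)) - of_real (g (j \<phi>) (j \<phi>) / 2) + of_real (g \<tau> \<tau> / 4))"
    unfolding Bfun_def Let_def jq c0 cb by simp
  have "cnj (Bfun bl J q \<tau> \<phi>) = exp (of_real (g \<tau> \<tau> / 4) + (\<i> * of_real (g (j \<phi>) (j \<psi>)) +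
      (\<i> / 2 * of_real (bl (j \<phi>) (j \<phi>)) - of_real (g (j \<phi>) (j \<phi>) / 2))))"
    unfolding Bf exp_cnj by (intro arg_cong[where f=exp]) (simp add: complex_eq_iff)
  then show ?thesis
    by (simp only: exp_add weight_def)
qed

lemma norm_weight_sq: "(norm (weight \<phi>))^2 = exp (- g (j \<phi>) (j \<phi>))"
  by (simp add: weight_def power2_eq_square exp_add[symmetric])

lemma weight_nonzero: "weight \<phi> \<noteq> 0"
  by (simp add: weight_def)

lemma continuous_on_weight: "continuous_on UNIV weight"
proof -
  have "continuous_on UNIV j"
    using jmap_props(1) by (simp add: linear_continuous_on linear_conv_bounded_linear)
  then show ?thesis
    unfolding weight_def gform_def omega_def
    by (intro continuous_intros bl.continuous_on J.continuous_on) auto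
qed

lemma trig_poly_times_weight_in_kernel_span:
  assumes "trig_poly P"
  obtains T c where "finite T" "\<And>\<phi>. (\<Sum>\<tau>\<in>T. c \<tau> * cnj (Bfun bl J q \<tau> \<phi>)) = P \<phi> * weight \<phi>"
proof -
  obtain V cv where V: "finite V" "\<And>\<phi>. P \<phi> = (\<Sum>v\<in>V. cv v * exp (\<i> * of_real (\<phi> \<bullet> v)))"
    using assms unfolding trig_poly_def by blast
  obtain \<psi> where \<psi>: "\<And>\<phi> v. g (j \<phi>) (j (\<psi> v)) = \<phi> \<bullet> v"
    using g_jmap_represents_inner by metis
  define \<tau> where "\<tau> v = - J (j (\<psi> v))" for v
  have "inj \<tau>"
  proof
    fix v w assume "\<tau> v = \<tau> w"
    then have "j (\<psi> v) = j (\<psi> w)"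
      using J_sq by (metis \<tau>_def minus_equation_iff)
    then have "(v - w) \<bullet> (v - w) = 0"
      using \<psi>[of "v - w" v] \<psi>[of "v - w" w] by (simp add: inner_diff_right)
    then show "v = w"
      by simp
  qed
  define c where "c t = cv (inv \<tau> t) / exp (of_real (g t t / 4))" for t
  have "(\<Sum>t\<in>\<tau> ` V. c t * cnj (Bfun bl J q t \<phi>)) = P \<phi> * weight \<phi>" for \<phi>
  proof -
    have "(\<Sum>t\<in>\<tau> ` V. c t * cnj (Bfun bl J q t \<phi>)) = (\<Sum>v\<in>V. c (\<tau> v) * cnj (Bfun bl J q (\<tau> v) \<phi>))"
      using \<open>inj \<tau>\<close> by (simp add: sum.reindex inj_on_subset)
    also have "\<dots> = (\<Sum>v\<in>V. cv v * exp (\<i> * of_real (\<phi> \<bullet> v)) * weight \<phi>)"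
      using \<open>inj \<tau>\<close> by (intro sum.cong refl) (simp add: c_def cnj_Bfun_eq[OF \<tau>_def] \<psi>)
    finally show ?thesis
      by (simp add: V(2) sum_distrib_right)
  qed
  then show ?thesis
    using that V(1) by blast
qed

lemma muQ_eq_density:
  "muQ bl J q = density lborel (\<lambda>_. inverse (\<integral>\<^sup>+\<phi>. ennreal (norm (weight \<phi>))^2 \<partial>lborel))"
  by (simp add: muQ_def norm_weight_sq ennreal_power)

lemma L2_approx_muQ_trig_poly_times_weight:
  assumes f_meas: "f \<in> borel_measurable (muQ bl J q)"
    and f_L2: "(\<integral>\<^sup>+\<phi>. ennreal (norm (f \<phi>))^2 \<partial>muQ bl J q) < \<infinity>" and "\<epsilon> > 0"
  obtains P where "trig_poly P" "sq_L2_dist (muQ bl J q) f (\<lambda>\<phi>. P \<phi> * weight \<phi>) < ennreal \<epsilon>"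
proof -
  let ?Z = "\<integral>\<^sup>+\<phi>. ennreal (norm (weight \<phi>))^2 \<partial>(lborel :: 'q measure)"
  have fm: "f \<in> borel_measurable lborel"
    using f_meas by (simp add: muQ_eq_density)
  have "\<exists>h\<in>{\<lambda>\<phi>. P \<phi> * weight \<phi> | P. trig_poly P}. sq_L2_dist (muQ bl J q) f h < ennreal \<epsilon>"
    unfolding muQ_eq_density
  proof (rule sq_L2_dist_density_const_approx[OF fm _ _ _ _ \<open>\<epsilon> > 0\<close>])
    show "{\<lambda>\<phi>. P \<phi> * weight \<phi> | P. trig_poly P} \<subseteq> borel_measurable lborel"
      using continuous_on_trig_poly continuous_on_weight
      by (auto intro!: borel_measurable_continuous_onI continuous_intros)
    show "(\<lambda>_. 0) \<in> {\<lambda>\<phi>. P \<phi> * weight \<phi> | P. trig_poly P}"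
      using trig_poly_const[of 0] by force
    show "(\<integral>\<^sup>+\<phi>. ennreal (norm (f \<phi>))^2 \<partial>density lborel (\<lambda>_. inverse ?Z)) < \<infinity>"
      using f_L2 by (simp add: muQ_eq_density)
    fix e :: real assume "0 < inverse ?Z" and fL2: "(\<integral>\<^sup>+\<phi>. ennreal (norm (f \<phi>))^2 \<partial>lborel) < \<infinity>"
      and "e > 0"
    then have "?Z < \<infinity>"
      by (simp add: ennreal_inverse_positive less_top)
    then obtain P where "trig_poly P" "sq_L2_dist lborel f (\<lambda>\<phi>. P \<phi> * weight \<phi>) < ennreal e"
      using L2_dense_trig_poly_times[OF fm fL2 continuous_on_weight weight_nonzero _ \<open>e > 0\<close>] by blast
    then show "\<exists>h\<in>{\<lambda>\<phi>. P \<phi> * weight \<phi> | P. trig_poly P}. sq_L2_dist lborel f h < ennreal e"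
      by blast
  qed
  then show ?thesis
    using that by blast
qed

end

theorem proposition3p2:
  fixes bl :: "'l::euclidean_space \<Rightarrow> 'l \<Rightarrow> real"
    and J :: "'l \<Rightarrow> 'l"
    and q :: "'l \<Rightarrow> 'q::euclidean_space"
  assumes bil: "bilinear bl"
    and nondeg: "\<forall>x. (\<forall>y. omega bl x y = 0) \<longrightarrow> x = 0"
    and dsum_int: "Mset bl \<inter> Nset bl = {0}"
    and dsum_span: "\<forall>x. \<exists>m\<in>Mset bl. \<exists>n\<in>Nset bl. x = m + n"
    and q_lin: "linear q" and q_surj: "surj q"
    and q_ker: "\<forall>x. q x = 0 \<longleftrightarrow> x \<in> Mset bl"
    and J_lin: "linear J" and J_sq: "\<forall>x. J (J x) = - x"
    and J_omega: "\<forall>x y. omega bl (J x) (J y) = omega bl x y"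
    and g_pos: "\<forall>x. x \<noteq> 0 \<longrightarrow> gform bl J x x > 0"
    and f_meas: "f \<in> borel_measurable (muQ bl J q)"
    and f_L2: "(\<integral>\<^sup>+ \<phi>. ennreal (norm (f \<phi> :: complex))^2 \<partial>(muQ bl J q)) < \<infinity>"
    and eps: "\<epsilon> > 0"
  shows "\<exists>T c. finite T \<and>
    (\<integral>\<^sup>+ \<phi>. ennreal (norm (f \<phi> - (\<Sum>\<tau>\<in>T. c \<tau> * cnj (Bfun bl J q \<tau> \<phi>))))^2 \<partial>(muQ bl J q))
      < ennreal \<epsilon>"
proof -
  interpret schroedinger_setting bl J q
    by (rule schroedinger_setting.intro[OF bil dsum_int dsum_span q_lin q_surj q_ker J_lin J_sq
        J_omega g_pos])
  obtain P where P: "trig_poly P"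
    and approx: "sq_L2_dist (muQ bl J q) f (\<lambda>\<phi>. P \<phi> * weight \<phi>) < ennreal \<epsilon>"
    using L2_approx_muQ_trig_poly_times_weight[OF f_meas f_L2 eps] by blast
  obtain T c where "finite T"
    and span: "\<And>\<phi>. (\<Sum>\<tau>\<in>T. c \<tau> * cnj (Bfun bl J q \<tau> \<phi>)) = P \<phi> * weight \<phi>"
    using trig_poly_times_weight_in_kernel_span[OF P] by blast
  then show ?thesis
    using approx unfolding sq_L2_dist_def by (intro exI[of _ T] exI[of _ c]) (simp add: span)
qed

end
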